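(* Let $\mathsf{X}$ be a retract of a qcb-space $\mathsf{Y}$. If $\mathsf{Y}$ satisfies Normann's condition, then so does $\mathsf{X}$.
   Context: A qcb-space is a topological quotient of a countably based space. $\mathsf{X}$ is a retract of $\mathsf{Y}$ if there are continuous $e\colon\mathsf{X}\to\mathsf{Y}$ and $r\colon\mathsf{Y}\to\mathsf{X}$ with $r\circ e=\mathrm{id}_{\mathsf{X}}$. A subset $A$ of a space $Z$ is functionally closed if $A=\varphi^{-1}[\{0\}]$ for some continuous $\varphi\colon Z\to[0,1]$. A space satisfies Normann's condition if every functionally closed subset is an intersection of clopen sets. *)

theory Defs
  imports "HOL-Analysis.Analysis"
begin

text \<open>A qcb-space: a topological quotient of a countably based (second countable) space.
  The countably based space lives on a type 'c that is supplied as a parameter.\<close>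
definition qcb_via :: "'c itself \<Rightarrow> 'b topology \<Rightarrow> bool" where
  "qcb_via _ Y \<longleftrightarrow> (\<exists>(Z::'c topology) q. second_countable Z \<and> quotient_map Z Y q)"

definition is_retract :: "'a topology \<Rightarrow> 'b topology \<Rightarrow> bool" where
  "is_retract X Y \<longleftrightarrow> (\<exists>e r. continuous_map X Y e \<and> continuous_map Y X r \<and>
      (\<forall>x \<in> topspace X. r (e x) = x))"

definition functionally_closed :: "'a topology \<Rightarrow> 'a set \<Rightarrow> bool" where
  "functionally_closed Z A \<longleftrightarrow>
     (\<exists>\<phi>. continuous_map Z (top_of_set {0..1::real}) \<phi> \<and> A = {x \<in> topspace Z. \<phi> x = 0})"

definition normann_condition :: "'a topology \<Rightarrow> bool" where
  "normann_condition Z \<longleftrightarrow>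
     (\<forall>A. functionally_closed Z A \<longrightarrow>
        (\<exists>\<C>. (\<forall>C \<in> \<C>. openin Z C \<and> closedin Z C) \<and> A = topspace Z \<inter> \<Inter>\<C>))"

end

theory Submission
  imports Defs
begin

text \<open>Pull a functionally closed set \<open>A \<subseteq> X\<close> back along the retraction \<open>r\<close>: the result is
  functionally closed in \<open>Y\<close>, hence an intersection of clopen sets, and pulling those back along
  the embedding \<open>e\<close> gives clopen sets of \<open>X\<close> whose intersection is \<open>e\<^sup>-\<^sup>1(r\<^sup>-\<^sup>1 A) = A\<close>.\<close>

definition clopen_intersection :: "'a topology \<Rightarrow> 'a set \<Rightarrow> bool" where
  "clopen_intersection Z A \<longleftrightarrow>
     (\<exists>\<C>. (\<forall>C \<in> \<C>. openin Z C \<and> closedin Z C) \<and> A = topspace Z \<inter> \<Inter>\<C>)"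

lemma normann_condition_iff_clopen_intersection:
  "normann_condition Z \<longleftrightarrow> (\<forall>A. functionally_closed Z A \<longrightarrow> clopen_intersection Z A)"
  unfolding normann_condition_def clopen_intersection_def ..

lemma functionally_closed_subset_topspace:
  "functionally_closed Z A \<Longrightarrow> A \<subseteq> topspace Z"
  unfolding functionally_closed_def by auto

lemma functionally_closed_continuous_map_preimage:
  assumes f: "continuous_map Y X f" and A: "functionally_closed X A"
  shows "functionally_closed Y {y \<in> topspace Y. f y \<in> A}"
proof -
  obtain \<phi> where \<phi>: "continuous_map X (top_of_set {0..1::real}) \<phi>"
    and A_eq: "A = {x \<in> topspace X. \<phi> x = 0}"
    using A unfolding functionally_closed_def by blast
  have "continuous_map Y (top_of_set {0..1::real}) (\<phi> \<circ> f)"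
    using continuous_map_compose[OF f \<phi>] .
  moreover have "{y \<in> topspace Y. f y \<in> A} = {y \<in> topspace Y. (\<phi> \<circ> f) y = 0}"
    using A_eq continuous_map_image_subset_topspace[OF f] by auto
  ultimately show ?thesis
    unfolding functionally_closed_def by blast
qed

lemma clopen_intersection_continuous_map_preimage:
  assumes f: "continuous_map X Y f" and B: "clopen_intersection Y B"
  shows "clopen_intersection X {x \<in> topspace X. f x \<in> B}"
proof -
  obtain \<C> where \<C>: "\<forall>C \<in> \<C>. openin Y C \<and> closedin Y C"
    and B_eq: "B = topspace Y \<inter> \<Inter>\<C>"
    using B unfolding clopen_intersection_def by blast
  define \<D> where "\<D> = (\<lambda>C. {x \<in> topspace X. f x \<in> C}) ` \<C>"
  have "\<forall>D \<in> \<D>. openin X D \<and> closedin X D"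
    unfolding \<D>_def using \<C> f
    by (auto intro: openin_continuous_map_preimage closedin_continuous_map_preimage)
  moreover have "{x \<in> topspace X. f x \<in> B} = topspace X \<inter> \<Inter>\<D>"
    unfolding \<D>_def B_eq using continuous_map_image_subset_topspace[OF f] by auto
  ultimately show ?thesis
    unfolding clopen_intersection_def by blast
qed

lemma retraction_preimage_pullback:
  assumes e: "continuous_map X Y e" and "\<forall>x \<in> topspace X. r (e x) = x"
    and "A \<subseteq> topspace X"
  shows "{x \<in> topspace X. e x \<in> {y \<in> topspace Y. r y \<in> A}} = A"
  using assms continuous_map_image_subset_topspace[OF e] by auto

lemma normann_condition_retract:
  assumes "is_retract X Y" and "normann_condition Y"
  shows "normann_condition X"
  unfolding normann_condition_iff_clopen_intersection
proof (intro allI impI)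
  fix A assume A: "functionally_closed X A"
  obtain e r where e: "continuous_map X Y e" and r: "continuous_map Y X r"
    and re: "\<forall>x \<in> topspace X. r (e x) = x"
    using assms(1) unfolding is_retract_def by blast
  have "clopen_intersection Y {y \<in> topspace Y. r y \<in> A}"
    using assms(2) functionally_closed_continuous_map_preimage[OF r A]
    unfolding normann_condition_iff_clopen_intersection by blast
  then have "clopen_intersection X {x \<in> topspace X. e x \<in> {y \<in> topspace Y. r y \<in> A}}"
    by (rule clopen_intersection_continuous_map_preimage[OF e])
  then show "clopen_intersection X A"
    using retraction_preimage_pullback[OF e re functionally_closed_subset_topspace[OF A]]
    by simp
qed

theorem lemma4p1:
  fixes X :: "'a topology" and Y :: "'b topology"
  assumes "qcb_via TYPE('c) Y"
    and "is_retract X Y"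
    and "normann_condition Y"
  shows "normann_condition X"
  using normann_condition_retract[OF assms(2,3)] .

end
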